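(* Let $k_0>0$, $0<r_s<r_M$, $p>1$, $L>0$, $f\in L^p(\mathbb{R}^3)$ with $\operatorname{supp}(f)\subset\mathcal{B}_{r_s}$, $\alpha\in C^1[0,L]$ and $\mathbf n=(n_1,n_2,n_3)^\top\in C^1([0,L],\mathbb{S}^2)$. If $\mathbf n'(t)=\mathbf 0$ for all $t$ (i.e. $\mathbf n$ is constant), then for $(k_1,k_2,t)\in\mathcal U$ $$|\nabla T_\pm(k_1,k_2,t)|=\frac{k_0\,|\alpha'(t)|\,|n_2k_1-n_1k_2|}{\kappa}.$$ If in addition $\mathbf n\notin\{\mathbf e_3,-\mathbf e_3\}$ and $\alpha$ is strictly increasing with $\alpha(0)=0$ and $\alpha(L)=2\pi$, then $$\operatorname{Card}\big(T_\pm^{-1}(T_\pm(k_1,k_2,t))\big)=2$$ for almost every $(k_1,k_2,t)\in\mathcal U$.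
   Context: $\mathcal{B}_r$ is the open ball in $\mathbb{R}^3$ of radius $r$ about $0$; $\mathbb{S}^2$ the unit sphere; $\mathbf e_3=(0,0,1)^\top$. For a unit vector $\mathbf n$ and angle $\alpha$, $R_{\mathbf n,\alpha}\mathbf y=(1-\cos\alpha)(\mathbf n\cdot\mathbf y)\mathbf n+\cos\alpha\,\mathbf y-\sin\alpha\,(\mathbf n\times\mathbf y)$. $\kappa=\kappa(k_1,k_2)=\sqrt{k_0^2-k_1^2-k_2^2}$. $\mathcal U=\{(k_1,k_2,t):k_1^2+k_2^2<k_0^2,\ 0\le t\le L\}$, $T_\pm(k_1,k_2,t)=R_{\mathbf n(t),\alpha(t)}(k_1,k_2,\pm\kappa-k_0)^\top$, $|\nabla T_\pm|$ is the absolute Jacobian determinant of $T_\pm$ in $(k_1,k_2,t)$, and $\operatorname{Card}(T_\pm^{-1}(\mathbf y))$ is the number of points of $\mathcal U$ mapped by $T_\pm$ to $\mathbf y$. *)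

theory Defs
  imports "HOL-Analysis.Analysis"
begin

definition rot :: "real^3 \<Rightarrow> real \<Rightarrow> real^3 \<Rightarrow> real^3" where
  "rot n a y = ((1 - cos a) * (n \<bullet> y)) *\<^sub>R n + cos a *\<^sub>R y - sin a *\<^sub>R cross3 n y"

definition kappa :: "real \<Rightarrow> real \<Rightarrow> real \<Rightarrow> real" where
  "kappa k0 k1 k2 = sqrt (k0^2 - k1^2 - k2^2)"

text \<open>The set U of points (k1,k2,t), encoded as vectors v with v$1 = k1, v$2 = k2, v$3 = t.\<close>
definition UU :: "real \<Rightarrow> real \<Rightarrow> (real^3) set" where
  "UU k0 L = {v. (v$1)^2 + (v$2)^2 < k0^2 \<and> 0 \<le> v$3 \<and> v$3 \<le> L}"

text \<open>T_s for s = 1 (T_+) and s = -1 (T_-).\<close>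
definition TT :: "real \<Rightarrow> (real \<Rightarrow> real^3) \<Rightarrow> (real \<Rightarrow> real) \<Rightarrow> real \<Rightarrow> real^3 \<Rightarrow> real^3" where
  "TT k0 n \<alpha> s v = rot (n (v$3)) (\<alpha> (v$3))
      (vector [v$1, v$2, s * kappa k0 (v$1) (v$2) - k0])"

definition e3 :: "real^3" where "e3 = vector [0, 0, 1]"

end

theory Submission
  imports Defs
begin

(*
  For a constant unit axis m, T_s(k1,k2,t) = R_{m,alpha(t)} Y_s(k1,k2) with
  Y_s(k1,k2) = (k1, k2, s kappa - k0) on the Ewald sphere |y + k0 e3| = k0.  The
  differential is R_{m,alpha} composed with dY_s - alpha' dt (m x Y_s), and det R = 1, so the
  Jacobian is an explicit 3x3 determinant.

  T_s(w) = T_s(v) forces Y_s(w) = R_{m,c} Y_s(v) with c = alpha(v3) - alpha(w3).  A rotation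
  about m keeps a point of the Ewald sphere on the sphere iff it keeps its height, i.e. iff
  p cos c + q sin c = p, where p, q are the coordinates of Y_s(v) along e3 - m3 m and m x e3.
  As alpha maps [0,L] bijectively onto [0, 2 pi], the preimages correspond to the solutions
  of this equation in [0, 2 pi]: exactly two (c = 0 and one more) unless q = 0 or
  q cos(a/2) = p sin(a/2) with a = alpha(v3).  Besides the planes t = 0, t = L and q = 0,
  the exceptional points form the image of a differentiable map of two variables, so
  they are a null set.
*)

lemma vec3_eq_vector: "(x::real^3) = vector [x$1, x$2, x$3]"
  by (simp add: vec_eq_iff forall_3 vector_3)

lemma norm_eq_1_iff_vec3: "norm (m::real^3) = 1 \<longleftrightarrow> (m$1)^2 + (m$2)^2 + (m$3)^2 = 1"
  by (simp add: norm_eq_sqrt_inner inner_vec_def sum_3 power2_eq_square)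

lemma vector3_eq_axis_sum:
  "vector [a, b, c] = a *\<^sub>R axis 1 1 + b *\<^sub>R axis 2 1 + c *\<^sub>R (axis 3 1 :: real^3)"
  by (simp add: vec_eq_iff forall_3 axis_def)

lemma inner_e3: "e3 \<bullet> x = x$3"
  by (simp add: e3_def inner_vec_def sum_3)

lemma bounded_linear_cross3: "bounded_linear (cross3 m)"
  using bilinear_cross by (simp add: bilinear_def linear_conv_bounded_linear)

lemma cross3_cross3_left: "cross3 m (cross3 m y) = (m \<bullet> y) *\<^sub>R m - (m \<bullet> m) *\<^sub>R y"
  by (simp add: cross3_def inner_vec_def sum_3 vec_eq_iff forall_3 algebra_simps)

section \<open>Rotations about a unit axis\<close>

lemma rot_0 [simp]: "rot m 0 y = y"
  by (simp add: rot_def)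

lemma linear_rot: "linear (rot m a)"
  by (rule linearI) (simp_all add: rot_def inner_add_right cross_add_right cross_mult_right algebra_simps)

lemma rot_add:
  assumes "norm m = 1"
  shows "rot m b (rot m c y) = rot m (b + c) y"
proof -
  obtain m1 m2 m3 where m: "m = vector [m1, m2, m3]" by (metis vec3_eq_vector)
  obtain y1 y2 y3 where y: "y = vector [y1, y2, y3]" by (metis vec3_eq_vector)
  show ?thesis using assms unfolding m y rot_def norm_eq_1_iff_vec3
    by (simp add: cross3_def inner_vec_def sum_3 vec_eq_iff forall_3 cos_add sin_add) algebra
qed

lemma inner_rot_axis:
  assumes "norm m = 1"
  shows "rot m a y \<bullet> m = y \<bullet> m"
proof -
  obtain m1 m2 m3 where m: "m = vector [m1, m2, m3]" by (metis vec3_eq_vector)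
  obtain y1 y2 y3 where y: "y = vector [y1, y2, y3]" by (metis vec3_eq_vector)
  show ?thesis using assms unfolding m y rot_def norm_eq_1_iff_vec3
    by (simp add: cross3_def inner_vec_def sum_3) algebra
qed

lemma inner_rot_rot:
  assumes "norm m = 1"
  shows "rot m a y \<bullet> rot m a y = y \<bullet> y"
proof -
  obtain m1 m2 m3 where m: "m = vector [m1, m2, m3]" by (metis vec3_eq_vector)
  obtain y1 y2 y3 where y: "y = vector [y1, y2, y3]" by (metis vec3_eq_vector)
  show ?thesis using assms unfolding m y rot_def norm_eq_1_iff_vec3
    by (simp add: cross3_def inner_vec_def sum_3) (use sin_cos_squared_add[of a] in algebra)
qed

lemma det_matrix_rot:
  assumes "norm m = 1"
  shows "det (matrix (rot m a)) = 1"
proof -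
  obtain m1 m2 m3 where m: "m = vector [m1, m2, m3]" by (metis vec3_eq_vector)
  show ?thesis using assms unfolding m rot_def norm_eq_1_iff_vec3
    by (simp add: matrix_def det_3 cross3_def inner_vec_def sum_3 axis_def)
       (use sin_cos_squared_add[of a] in algebra)
qed

lemma det_matrix_rot_comp:
  assumes "norm m = 1" "linear L"
  shows "det (matrix (\<lambda>h. rot m a (L h))) = det (matrix L)"
proof -
  have "matrix (\<lambda>h. rot m a (L h)) = matrix (rot m a) ** matrix L"
    using matrix_compose[OF assms(2) linear_rot] by (simp add: o_def)
  then show ?thesis by (simp add: det_mul det_matrix_rot[OF assms(1)])
qed

lemma has_derivative_rot:
  assumes m: "norm m = 1"
    and f: "(f has_derivative f') (at x within S)" and g: "(g has_derivative g') (at x within S)"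
  shows "((\<lambda>x. rot m (f x) (g x)) has_derivative
           (\<lambda>h. rot m (f x) (g' h - f' h *\<^sub>R cross3 m (g x)))) (at x within S)"
proof -
  have dc: "((\<lambda>x. cross3 m (g x)) has_derivative (\<lambda>h. cross3 m (g' h))) (at x within S)"
    by (rule bounded_linear.has_derivative[OF bounded_linear_cross3 g])
  have mm: "m \<bullet> m = 1" using m by (simp add: norm_eq_1)
  show ?thesis
    unfolding rot_def
    by (rule has_derivative_eq_rhs, (rule derivative_intros f g dc)+)
       (simp add: fun_eq_iff dot_cross_self Cross3.right_diff_distrib cross_mult_right
         cross3_cross3_left mm algebra_simps)
qed

section \<open>The frame orthogonal to the axis\<close>

(* Together with cross3 m e3 it spans the plane orthogonal to m. *)
definition e3_perp :: "real^3 \<Rightarrow> real^3" where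
  "e3_perp m = e3 - (m$3) *\<^sub>R m"

lemma inner_cross3_e3: "y \<bullet> cross3 m e3 = m$2 * y$1 - m$1 * y$2"
  by (simp add: e3_def cross3_def inner_vec_def sum_3)

lemma nth3_eq_inner_e3_perp: "y$3 = m$3 * (y \<bullet> m) + y \<bullet> e3_perp m"
  by (simp add: e3_perp_def e3_def inner_diff_right inner_vec_def sum_3 algebra_simps)

lemma inner_rot_e3_perp:
  assumes "norm m = 1"
  shows "rot m c y \<bullet> e3_perp m = cos c * (y \<bullet> e3_perp m) + sin c * (y \<bullet> cross3 m e3)"
proof -
  obtain m1 m2 m3 where m: "m = vector [m1, m2, m3]" by (metis vec3_eq_vector)
  obtain y1 y2 y3 where y: "y = vector [y1, y2, y3]" by (metis vec3_eq_vector)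
  show ?thesis using assms unfolding m y rot_def e3_perp_def e3_def norm_eq_1_iff_vec3
    by (simp add: cross3_def inner_vec_def sum_3) algebra
qed

lemma rot_nth3_eq_iff:
  assumes "norm m = 1"
  shows "(rot m c y)$3 = y$3 \<longleftrightarrow>
           (y \<bullet> e3_perp m) * cos c + (y \<bullet> cross3 m e3) * sin c = y \<bullet> e3_perp m"
  using nth3_eq_inner_e3_perp[of "rot m c y" m] nth3_eq_inner_e3_perp[of y m]
  by (simp add: inner_rot_axis[OF assms] inner_rot_e3_perp[OF assms] mult.commute)

lemma e3_perp_frame:
  assumes "norm m = 1"
  shows "m \<bullet> e3_perp m = 0" "e3_perp m \<bullet> cross3 m e3 = 0"
    "e3_perp m \<bullet> e3_perp m = (m$1)^2 + (m$2)^2" "cross3 m e3 \<bullet> cross3 m e3 = (m$1)^2 + (m$2)^2"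
  using assms unfolding norm_eq_1_iff_vec3
  by (simp_all add: e3_perp_def e3_def cross3_def inner_vec_def sum_3 algebra_simps power2_eq_square)
     (simp_all only: power2_eq_square[symmetric], algebra+)

lemma e3_perp_decomposition:
  assumes "norm m = 1"
  shows "(e3_perp m \<bullet> e3_perp m) *\<^sub>R y =
           ((e3_perp m \<bullet> e3_perp m) * (y \<bullet> m)) *\<^sub>R m + (y \<bullet> e3_perp m) *\<^sub>R e3_perp m
           + (y \<bullet> cross3 m e3) *\<^sub>R cross3 m e3"
proof -
  obtain m1 m2 m3 where m: "m = vector [m1, m2, m3]" by (metis vec3_eq_vector)
  obtain y1 y2 y3 where y: "y = vector [y1, y2, y3]" by (metis vec3_eq_vector)
  show ?thesis using assms unfolding m y e3_perp_def e3_def norm_eq_1_iff_vec3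
    by (simp add: cross3_def inner_vec_def sum_3 vec_eq_iff forall_3) algebra
qed

lemma e3_perp_nonzero:
  assumes "norm m = 1" "m \<noteq> e3" "m \<noteq> - e3"
  shows "e3_perp m \<noteq> 0"
proof
  assume "e3_perp m = 0"
  then have "(m$1)^2 + (m$2)^2 = 0" using e3_perp_frame(3)[OF assms(1)] by simp
  then have "m$1 = 0" "m$2 = 0" by (simp_all add: sum_power2_eq_zero_iff)
  moreover from this have "m$3 = 1 \<or> m$3 = -1"
    using assms(1) by (simp add: norm_eq_1_iff_vec3 power2_eq_1_iff)
  ultimately show False using assms(2,3) by (auto simp: e3_def vec_eq_iff forall_3)
qed

section \<open>The Ewald sphere\<close>

(* Y_s(k1,k2) of the paper: the point of the Ewald sphere that T_s rotates. *)
definition ewald_pt :: "real \<Rightarrow> real \<Rightarrow> real^3 \<Rightarrow> real^3" where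
  "ewald_pt k0 s w = vector [w$1, w$2, s * kappa k0 (w$1) (w$2) - k0]"

lemma TT_eq_rot_ewald_pt:
  assumes "\<forall>t \<in> {0..L}. n t = m" "w \<in> UU k0 L"
  shows "TT k0 n \<alpha> s w = rot m (\<alpha> (w$3)) (ewald_pt k0 s w)"
  using assms by (simp add: TT_def ewald_pt_def UU_def)

lemma ewald_pt_sphere:
  assumes "w \<in> UU k0 L" "s \<in> {1, -1}"
  shows "ewald_pt k0 s w \<bullet> ewald_pt k0 s w + 2 * k0 * (ewald_pt k0 s w $ 3) = 0"
proof -
  have "(kappa k0 (w$1) (w$2))^2 = k0^2 - (w$1)^2 - (w$2)^2"
    using assms(1) by (simp add: UU_def kappa_def)
  moreover have "s^2 = 1" using assms(2) by auto
  ultimately show ?thesis unfolding ewald_pt_def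
    by (simp add: inner_vec_def sum_3 power2_eq_square algebra_simps) algebra
qed

lemma ewald_pt_same_height:
  assumes w: "w \<in> UU k0 L" and t: "t \<in> {0..L}"
    and z: "z \<bullet> z = ewald_pt k0 s w \<bullet> ewald_pt k0 s w" "z$3 = ewald_pt k0 s w $ 3"
  shows "vector [z$1, z$2, t] \<in> UU k0 L" "ewald_pt k0 s (vector [z$1, z$2, t]) = z"
proof -
  have same_radius: "(z$1)^2 + (z$2)^2 = (w$1)^2 + (w$2)^2"
    using z by (simp add: ewald_pt_def inner_vec_def sum_3 power2_eq_square)
  then show "vector [z$1, z$2, t] \<in> UU k0 L" using w t by (simp add: UU_def)
  have "kappa k0 (z$1) (z$2) = kappa k0 (w$1) (w$2)"
    unfolding kappa_def using same_radius by (simp add: algebra_simps)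
  then show "ewald_pt k0 s (vector [z$1, z$2, t]) = z"
    using z(2) by (simp add: ewald_pt_def vec_eq_iff forall_3)
qed

lemma has_derivative_kappa:
  assumes "(v$1)^2 + (v$2)^2 < k0^2"
  shows "((\<lambda>w::real^3. kappa k0 (w$1) (w$2)) has_derivative
           (\<lambda>h. - (v$1 * h$1 + v$2 * h$2) / kappa k0 (v$1) (v$2))) (at v within S)"
proof -
  have pos: "0 < k0^2 - (v$1)^2 - (v$2)^2" using assms by simp
  have radicand: "((\<lambda>w::real^3. k0^2 - (w$1)^2 - (w$2)^2) has_derivative
                   (\<lambda>h. - (2 * v$1 * h$1 + 2 * v$2 * h$2))) (at v within S)"
    by (rule has_derivative_eq_rhs,
        (rule derivative_intros bounded_linear.has_derivative[OF bounded_linear_vec_nth])+)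
       (simp add: fun_eq_iff)
  show ?thesis
    unfolding kappa_def
    by (rule has_derivative_eq_rhs[OF DERIV_compose_FDERIV[OF DERIV_real_sqrt[OF pos] radicand]])
       (use pos in \<open>simp add: fun_eq_iff field_simps\<close>)
qed

lemma has_derivative_ewald_pt:
  assumes "(v$1)^2 + (v$2)^2 < k0^2"
  shows "(ewald_pt k0 s has_derivative
           (\<lambda>h. vector [h$1, h$2, - s * (v$1 * h$1 + v$2 * h$2) / kappa k0 (v$1) (v$2)]))
         (at v within S)"
  unfolding ewald_pt_def vector3_eq_axis_sum
  by (rule has_derivative_eq_rhs,
      (rule has_derivative_kappa[OF assms] derivative_intros
        bounded_linear.has_derivative[OF bounded_linear_vec_nth])+)
     (simp add: fun_eq_iff algebra_simps)

section \<open>The Jacobian\<close>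

lemma det_ewald_jacobian:
  assumes kk: "kk \<noteq> 0" "kk^2 = k0^2 - k1^2 - k2^2" and s: "s^2 = 1"
  shows "det (matrix (\<lambda>h::real^3. vector [h$1, h$2, - s * (k1 * h$1 + k2 * h$2) / kk]
            - (a' * h$3) *\<^sub>R cross3 m (vector [k1, k2, s * kk - k0])))
         = s * k0 * a' * (m$2 * k1 - m$1 * k2) / kk"
  using assms
  by (simp add: matrix_def det_3 cross3_def axis_def field_simps) algebra

lemma TT_has_derivative_det:
  assumes k0: "k0 > 0" and s: "s \<in> {1, -1}" and m: "norm m = 1"
    and \<alpha>: "\<And>t. t \<in> {0..L} \<Longrightarrow> (\<alpha> has_real_derivative \<alpha>' t) (at t within {0..L})"
    and n: "\<forall>t \<in> {0..L}. n t = m"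
    and v: "v \<in> UU k0 L"
  shows "\<exists>D. (TT k0 n \<alpha> s has_derivative D) (at v within UU k0 L) \<and>
           \<bar>det (matrix D)\<bar> =
             k0 * \<bar>\<alpha>' (v$3)\<bar> * \<bar>(n (v$3))$2 * v$1 - (n (v$3))$1 * v$2\<bar> / kappa k0 (v$1) (v$2)"
proof -
  define kk where "kk = kappa k0 (v$1) (v$2)"
  define D\<^sub>0 where "D\<^sub>0 = (\<lambda>h::real^3. vector [h$1, h$2, - s * (v$1 * h$1 + v$2 * h$2) / kk]
                           - (\<alpha>' (v$3) * h$3) *\<^sub>R cross3 m (ewald_pt k0 s v))"
  have v_in: "(v$1)^2 + (v$2)^2 < k0^2" "v$3 \<in> {0..L}" using v by (auto simp: UU_def)
  then have kk: "kk > 0" "kk^2 = k0^2 - (v$1)^2 - (v$2)^2" by (simp_all add: kk_def kappa_def)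
  have d\<alpha>: "((\<lambda>w::real^3. \<alpha> (w$3)) has_derivative (\<lambda>h. \<alpha>' (v$3) * h$3)) (at v within UU k0 L)"
  proof (rule has_derivative_in_compose2[where g = \<alpha> and g' = "\<lambda>t. (*) (\<alpha>' t)"
                                           and t = "{0..L}" and f' = "\<lambda>h. h$3"])
    show "(\<alpha> has_derivative (*) (\<alpha>' t)) (at t within {0..L})" if "t \<in> {0..L}" for t
      using \<alpha>[OF that] by (simp add: has_field_derivative_def)
    show "((\<lambda>w::real^3. w$3) has_derivative (\<lambda>h. h$3)) (at v within UU k0 L)"
      by (rule bounded_linear.has_derivative[OF bounded_linear_vec_nth has_derivative_ident])
  qed (use v in \<open>auto simp: UU_def\<close>)
  have "((\<lambda>w. rot m (\<alpha> (w$3)) (ewald_pt k0 s w)) has_derivative (\<lambda>h. rot m (\<alpha> (v$3)) (D\<^sub>0 h)))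
          (at v within UU k0 L)"
    unfolding D\<^sub>0_def kk_def
    by (rule has_derivative_rot[OF m d\<alpha> has_derivative_ewald_pt[OF v_in(1)]])
  then have dT: "(TT k0 n \<alpha> s has_derivative (\<lambda>h. rot m (\<alpha> (v$3)) (D\<^sub>0 h))) (at v within UU k0 L)"
    by (rule has_derivative_transform_within[OF _ zero_less_one v])
       (rule TT_eq_rot_ewald_pt[OF n, symmetric])
  have "linear D\<^sub>0"
    by (rule linearI) (simp_all add: D\<^sub>0_def vec_eq_iff forall_3 algebra_simps flip: add_divide_distrib)
  then have "det (matrix (\<lambda>h. rot m (\<alpha> (v$3)) (D\<^sub>0 h))) = det (matrix D\<^sub>0)"
    by (rule det_matrix_rot_comp[OF m])
  also have "\<dots> = s * k0 * \<alpha>' (v$3) * (m$2 * v$1 - m$1 * v$2) / kk"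
    unfolding D\<^sub>0_def ewald_pt_def kk_def[symmetric]
    by (rule det_ewald_jacobian) (use kk s in auto)
  finally show ?thesis
    using dT s k0 kk bspec[OF n v_in(2)] by (auto simp: abs_mult kk_def)
qed

section \<open>Counting preimages\<close>

lemma cos_sin_double_sub:
  fixes p q \<theta> :: real
  shows "p * cos (2 * \<theta>) + q * sin (2 * \<theta>) - p = 2 * sin \<theta> * (q * cos \<theta> - p * sin \<theta>)"
  unfolding cos_double_sin sin_double by (simp add: algebra_simps power2_eq_square)

lemma cos_sin_root_unique:
  fixes p q :: real
  assumes "q \<noteq> 0" "q * cos \<theta> = p * sin \<theta>" "q * cos \<theta>' = p * sin \<theta>'" "\<bar>\<theta> - \<theta>'\<bar> < pi"
  shows "\<theta> = \<theta>'"
proof -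
  have "q * sin (\<theta> - \<theta>') = sin \<theta> * (q * cos \<theta>') - (q * cos \<theta>) * sin \<theta>'"
    by (simp add: sin_diff algebra_simps)
  also have "\<dots> = 0" using assms(2,3) by simp
  finally have "sin (\<theta> - \<theta>') = 0" using assms(1) by simp
  then show ?thesis using sin_eq_0_pi[of "\<theta> - \<theta>'"] assms(4) by force
qed

lemma card_cos_sin_eq_solutions:
  fixes a p q :: real
  assumes a: "0 < a" "a < 2 * pi" and q: "q \<noteq> 0" and nondeg: "q * cos (a/2) \<noteq> p * sin (a/2)"
  shows "card {b \<in> {0..2*pi}. p * cos (a - b) + q * sin (a - b) = p} = 2"
proof -
  \<comment> \<open>With \<open>\<theta> = (a - b)/2\<close> the equation reads \<open>sin \<theta> * g \<theta> = 0\<close>, and \<open>\<theta>\<close> ranges over an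
      interval of length \<open>pi\<close> containing exactly one zero of each factor.\<close>
  define g where "g \<theta> = q * cos \<theta> - p * sin \<theta>" for \<theta>
  have "continuous_on {a/2 - pi..a/2} g" unfolding g_def by (intro continuous_intros)
  moreover have "g (a/2 - pi) = - g (a/2)" "g (a/2) \<noteq> 0"
    using nondeg by (simp_all add: g_def cos_diff sin_diff)
  ultimately obtain \<theta>\<^sub>2 where \<theta>\<^sub>2: "a/2 - pi \<le> \<theta>\<^sub>2" "\<theta>\<^sub>2 \<le> a/2" "g \<theta>\<^sub>2 = 0"
    using IVT'[of g "a/2 - pi" 0 "a/2"] IVT2'[of g "a/2" 0 "a/2 - pi"]
    by (cases "g (a/2) > 0") (auto simp: not_less)
  then have \<theta>\<^sub>2_strict: "a/2 - pi < \<theta>\<^sub>2" "\<theta>\<^sub>2 < a/2" "\<theta>\<^sub>2 \<noteq> 0"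
    using \<open>g (a/2) \<noteq> 0\<close> \<open>g (a/2 - pi) = - g (a/2)\<close> q by (auto simp: g_def le_less)
  have "{b \<in> {0..2*pi}. p * cos (a - b) + q * sin (a - b) = p} = {a, a - 2 * \<theta>\<^sub>2}"
  proof (intro set_eqI iffI)
    fix b assume "b \<in> {b \<in> {0..2*pi}. p * cos (a - b) + q * sin (a - b) = p}"
    then have b: "0 \<le> b" "b \<le> 2 * pi" and "p * cos (a - b) + q * sin (a - b) - p = 0"
      by auto
    moreover have "2 * ((a - b)/2) = a - b" by simp
    note cos_sin_double_sub[of p "(a - b)/2" q, unfolded this]
    ultimately have "sin ((a - b)/2) = 0 \<or> g ((a - b)/2) = 0" by (simp add: g_def)
    then show "b \<in> {a, a - 2 * \<theta>\<^sub>2}"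
    proof
      assume "sin ((a - b)/2) = 0"
      moreover have "- pi < (a - b)/2" "(a - b)/2 < pi" using a b by simp_all
      ultimately have "(a - b)/2 = 0" using sin_eq_0_pi by blast
      then show ?thesis by simp
    next
      assume root: "g ((a - b)/2) = 0"
      have "\<bar>(a - b)/2 - \<theta>\<^sub>2\<bar> < pi"
        using b \<theta>\<^sub>2_strict by (simp add: abs_less_iff field_simps)
      then have "(a - b)/2 = \<theta>\<^sub>2"
        by (rule cos_sin_root_unique[where p = p, OF q, rotated 2]) (use root \<theta>\<^sub>2(3) in \<open>simp_all add: g_def\<close>)
      then show ?thesis by simp
    qed
  next
    fix b assume "b \<in> {a, a - 2 * \<theta>\<^sub>2}"
    moreover have "p * cos (2 * \<theta>\<^sub>2) + q * sin (2 * \<theta>\<^sub>2) = p"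
      using cos_sin_double_sub[of p "\<theta>\<^sub>2" q] \<theta>\<^sub>2(3) by (simp add: g_def)
    moreover have "0 \<le> a - 2 * \<theta>\<^sub>2" "a - 2 * \<theta>\<^sub>2 \<le> 2 * pi" using \<theta>\<^sub>2 by simp_all
    ultimately show "b \<in> {b \<in> {0..2*pi}. p * cos (a - b) + q * sin (a - b) = p}"
      using a by auto
  qed
  then show ?thesis using \<theta>\<^sub>2_strict by simp
qed

lemma strict_mono_on_bij_betw_Icc:
  fixes f :: "real \<Rightarrow> real"
  assumes "strict_mono_on {a..b} f" "continuous_on {a..b} f" "a \<le> b"
  shows "bij_betw f {a..b} {f a..f b}"
proof (rule bij_betw_imageI)
  show "inj_on f {a..b}" using assms(1) by (rule strict_mono_on_imp_inj_on)
  have "mono_on {a..b} f" using assms(1) by (rule strict_mono_on_imp_mono_on)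
  then have "f ` {a..b} \<subseteq> {f a..f b}" using assms(3) by (auto elim!: mono_onD)
  moreover have "{f a..f b} \<subseteq> f ` {a..b}" using IVT'[OF _ _ assms(3,2)] by fastforce
  ultimately show "f ` {a..b} = {f a..f b}" by blast
qed

lemma TT_preimage_eq:
  fixes \<alpha> :: "real \<Rightarrow> real"
  assumes k0: "k0 \<noteq> 0" and s: "s \<in> {1, -1}" and m: "norm m = 1"
    and n: "\<forall>t \<in> {0..L}. n t = m" and v: "v \<in> UU k0 L"
  defines "y \<equiv> ewald_pt k0 s v" and "a \<equiv> \<alpha> (v$3)"
  shows "{w \<in> UU k0 L. TT k0 n \<alpha> s w = TT k0 n \<alpha> s v} =
           (\<lambda>t. vector [(rot m (a - \<alpha> t) y)$1, (rot m (a - \<alpha> t) y)$2, t]) `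
           {t \<in> {0..L}. (y \<bullet> e3_perp m) * cos (a - \<alpha> t) + (y \<bullet> cross3 m e3) * sin (a - \<alpha> t)
                         = y \<bullet> e3_perp m}"
    (is "?P = ?lift ` ?T")
proof (intro set_eqI iffI)
  have y_sphere: "y \<bullet> y + 2 * k0 * y$3 = 0" unfolding y_def by (rule ewald_pt_sphere[OF v s])
  fix w assume "w \<in> ?P"
  then have w: "w \<in> UU k0 L" and "rot m (\<alpha> (w$3)) (ewald_pt k0 s w) = rot m a y"
    by (auto simp: TT_eq_rot_ewald_pt[OF n] v a_def y_def)
  then have "rot m (- \<alpha> (w$3)) (rot m (\<alpha> (w$3)) (ewald_pt k0 s w)) = rot m (- \<alpha> (w$3)) (rot m a y)"
    by simp
  then have ew: "ewald_pt k0 s w = rot m (a - \<alpha> (w$3)) y" by (simp add: rot_add[OF m])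
  have "rot m (a - \<alpha> (w$3)) y \<bullet> rot m (a - \<alpha> (w$3)) y + 2 * k0 * (rot m (a - \<alpha> (w$3)) y)$3 = 0"
    using ewald_pt_sphere[OF w s] unfolding ew .
  then have "2 * k0 * (rot m (a - \<alpha> (w$3)) y)$3 = 2 * k0 * y$3"
    using y_sphere unfolding inner_rot_rot[OF m] by linarith
  then have "(rot m (a - \<alpha> (w$3)) y)$3 = y$3" using k0 by simp
  then have "w$3 \<in> ?T" using w by (simp add: rot_nth3_eq_iff[OF m] UU_def)
  moreover have "w = ?lift (w$3)" by (simp add: ew[symmetric] ewald_pt_def vec_eq_iff forall_3)
  ultimately show "w \<in> ?lift ` ?T" by blast
next
  fix w assume "w \<in> ?lift ` ?T"
  then obtain t where t: "t \<in> {0..L}" and w: "w = ?lift t"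
    and "(rot m (a - \<alpha> t) y)$3 = y$3" by (auto simp: rot_nth3_eq_iff[OF m])
  then have wU: "w \<in> UU k0 L" and ew: "ewald_pt k0 s w = rot m (a - \<alpha> t) y"
    using ewald_pt_same_height[OF v t, of "rot m (a - \<alpha> t) y" s]
    by (simp_all add: inner_rot_rot[OF m] y_def)
  have "TT k0 n \<alpha> s w = rot m (\<alpha> (w$3)) (ewald_pt k0 s w)"
    using TT_eq_rot_ewald_pt[OF n wU] .
  also have "\<dots> = rot m (\<alpha> t) (rot m (a - \<alpha> t) y)" unfolding ew by (simp add: w)
  also have "\<dots> = TT k0 n \<alpha> s v" by (simp add: rot_add[OF m] TT_eq_rot_ewald_pt[OF n v] a_def y_def)
  finally show "w \<in> ?P" using wU by blast
qed

lemma card_TT_preimage: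
  fixes \<alpha> :: "real \<Rightarrow> real"
  assumes k0: "k0 \<noteq> 0" and s: "s \<in> {1, -1}" and m: "norm m = 1"
    and n: "\<forall>t \<in> {0..L}. n t = m" and v: "v \<in> UU k0 L" and t: "0 < v$3" "v$3 < L"
    and \<alpha>: "strict_mono_on {0..L} \<alpha>" "continuous_on {0..L} \<alpha>" "\<alpha> 0 = 0" "\<alpha> L = 2 * pi"
    and transversal: "m$2 * v$1 - m$1 * v$2 \<noteq> 0"
  defines "y \<equiv> ewald_pt k0 s v"
  assumes nondeg: "(y \<bullet> cross3 m e3) * cos (\<alpha> (v$3) / 2) \<noteq> (y \<bullet> e3_perp m) * sin (\<alpha> (v$3) / 2)"
  shows "card {w \<in> UU k0 L. TT k0 n \<alpha> s w = TT k0 n \<alpha> s v} = 2"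
proof -
  define a where "a = \<alpha> (v$3)"
  define T where "T = {t \<in> {0..L}. (y \<bullet> e3_perp m) * cos (a - \<alpha> t) + (y \<bullet> cross3 m e3) * sin (a - \<alpha> t)
                                    = y \<bullet> e3_perp m}"
  have "0 < a" "a < 2 * pi"
    using strict_mono_onD[OF \<alpha>(1), of 0 "v$3"] strict_mono_onD[OF \<alpha>(1), of "v$3" L] t \<alpha>(3,4)
    by (auto simp: a_def)
  moreover have "y \<bullet> cross3 m e3 \<noteq> 0"
    using transversal by (simp add: y_def inner_cross3_e3 ewald_pt_def)
  ultimately have "card {b \<in> {0..2*pi}. (y \<bullet> e3_perp m) * cos (a - b) + (y \<bullet> cross3 m e3) * sin (a - b)
                                    = y \<bullet> e3_perp m} = 2"
    using nondeg by (intro card_cos_sin_eq_solutions) (auto simp: a_def)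
  moreover have "bij_betw \<alpha> {0..L} {0..2*pi}"
    using strict_mono_on_bij_betw_Icc[OF \<alpha>(1,2)] t \<alpha>(3,4) by simp
  then have "bij_betw \<alpha> T {b \<in> {0..2*pi}. (y \<bullet> e3_perp m) * cos (a - b) + (y \<bullet> cross3 m e3) * sin (a - b)
                                    = y \<bullet> e3_perp m}"
    unfolding T_def by (rule bij_betw_Collect) simp
  ultimately have "card T = 2" by (simp add: bij_betw_same_card)
  moreover have "inj_on (\<lambda>t. vector [(rot m (a - \<alpha> t) y)$1, (rot m (a - \<alpha> t) y)$2, t] :: real^3) T"
    by (rule inj_onI) (metis vector_3(3))
  ultimately show ?thesis
    unfolding TT_preimage_eq[OF k0 s m n v] by (simp add: card_image T_def a_def y_def)
qed

section \<open>The exceptional set\<close>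

(* For a unit vector d, the point other than 0 where the line through 0 in direction d meets
   the Ewald sphere. *)
definition sphere_pt :: "real \<Rightarrow> real^3 \<Rightarrow> real^3" where
  "sphere_pt k0 d = (-2 * k0 * d$3) *\<^sub>R d"

lemma sphere_pt_normalize:
  assumes "y \<bullet> y + 2 * k0 * y$3 = 0" "y \<noteq> 0"
  shows "sphere_pt k0 (y /\<^sub>R norm y) = y"
proof -
  have "y \<bullet> y = -2 * k0 * y$3" using assms(1) by linarith
  then have "-2 * k0 * (y /\<^sub>R norm y)$3 = (y \<bullet> y) / norm y" by (simp add: divide_inverse algebra_simps)
  also have "\<dots> = norm y" using assms(2) by (simp add: dot_square_norm power2_eq_square)
  finally show ?thesis using assms(2) by (simp add: sphere_pt_def)
qed

lemma normalize_polar_in_plane: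
  fixes u M y :: "'a::real_inner"
  assumes u: "norm u = 1" and uM: "u \<bullet> M = 0" and M: "norm M = r" "r > 0"
    and y: "y = h *\<^sub>R u + c *\<^sub>R M" "y \<noteq> 0"
  obtains \<psi> where "y /\<^sub>R norm y = cos \<psi> *\<^sub>R u + (sin \<psi> / r) *\<^sub>R M"
proof -
  have "u \<bullet> u = 1" "M \<bullet> M = r^2" using u M by (simp_all add: dot_square_norm)
  then have norm_y: "(norm y)^2 = h^2 + (c * r)^2"
    using uM unfolding y(1) power2_norm_eq_inner
    by (simp add: inner_add_left inner_add_right inner_commute power2_eq_square algebra_simps)
  have "(h / norm y)^2 + (c * r / norm y)^2 = (h^2 + (c * r)^2) / (norm y)^2"
    by (simp only: power_divide add_divide_distrib)
  also have "\<dots> = 1" unfolding norm_y[symmetric] using y(2) by simp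
  finally have "(h / norm y)^2 + (c * r / norm y)^2 = 1" .
  then obtain \<psi> where \<psi>: "h / norm y = cos \<psi>" "c * r / norm y = sin \<psi>"
    by (rule sincos_total_2pi) blast
  have "(c * r / norm y) / r = c / norm y" using M(2) by simp
  moreover have "y /\<^sub>R norm y = (h / norm y) *\<^sub>R u + (c / norm y) *\<^sub>R M"
    by (simp add: y(1) scaleR_add_right divide_inverse mult.commute)
  ultimately have "y /\<^sub>R norm y = (h / norm y) *\<^sub>R u + ((c * r / norm y) / r) *\<^sub>R M" by simp
  then show thesis unfolding \<psi> by (rule that)
qed

definition fold_dir :: "real^3 \<Rightarrow> real \<Rightarrow> real \<Rightarrow> real^3" where
  "fold_dir m \<theta> \<psi> = cos \<psi> *\<^sub>R m
     + (sin \<psi> / norm (e3_perp m)) *\<^sub>R (cos \<theta> *\<^sub>R e3_perp m + sin \<theta> *\<^sub>R cross3 m e3)"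

lemma sphere_pt_fold_dir_surj:
  assumes m: "norm m = 1" and m_e3: "e3_perp m \<noteq> 0"
    and y: "y \<bullet> y + 2 * k0 * y$3 = 0" "y \<noteq> 0"
    and fold: "(y \<bullet> cross3 m e3) * cos \<theta> = (y \<bullet> e3_perp m) * sin \<theta>"
  obtains \<psi> where "sphere_pt k0 (fold_dir m \<theta> \<psi>) = y"
proof -
  define U W where "U = e3_perp m" and "W = cross3 m e3"
  define M where "M = cos \<theta> *\<^sub>R U + sin \<theta> *\<^sub>R W"
  define r where "r = norm U"
  note frame = e3_perp_frame[OF m, folded U_def W_def]
  have r: "r > 0" "U \<bullet> U = r^2" "W \<bullet> W = r^2"
    using m_e3 frame by (simp_all add: r_def U_def power2_norm_eq_inner)
  have "m \<bullet> M = 0" using frame by (simp add: M_def W_def inner_add_right dot_cross_self)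
  have "norm M = r"
  proof -
    have "M \<bullet> M = (cos \<theta>)^2 * (U \<bullet> U) + (sin \<theta>)^2 * (W \<bullet> W)"
      using frame(2) by (simp add: M_def inner_add_left inner_add_right inner_commute power2_eq_square)
    also have "\<dots> = r^2" using r by (simp flip: distrib_right)
    finally show ?thesis using r(1) by (simp add: norm_eq_sqrt_inner)
  qed
  have "(y \<bullet> M) * cos \<theta> = y \<bullet> U" "(y \<bullet> M) * sin \<theta> = y \<bullet> W"
    using fold unfolding M_def U_def W_def inner_add_right
    by (simp_all add: algebra_simps) (use sin_cos_squared_add[of \<theta>] in algebra)+
  then have "(y \<bullet> U) *\<^sub>R U + (y \<bullet> W) *\<^sub>R W = (y \<bullet> M) *\<^sub>R M"
    by (metis M_def scaleR_add_right scaleR_scaleR)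
  then have decomp: "r^2 *\<^sub>R y = (r^2 * (y \<bullet> m)) *\<^sub>R m + (y \<bullet> M) *\<^sub>R M"
    using e3_perp_decomposition[OF m, of y, folded U_def W_def] r by (simp add: add.assoc)
  have "y = inverse (r^2) *\<^sub>R (r^2 *\<^sub>R y)" using r(1) by simp
  also have "\<dots> = (y \<bullet> m) *\<^sub>R m + ((y \<bullet> M) / r^2) *\<^sub>R M"
    unfolding decomp using r(1) by (simp add: scaleR_add_right divide_inverse_commute)
  finally have "y = (y \<bullet> m) *\<^sub>R m + ((y \<bullet> M) / r^2) *\<^sub>R M" .
  then obtain \<psi> where "y /\<^sub>R norm y = cos \<psi> *\<^sub>R m + (sin \<psi> / r) *\<^sub>R M"
    using normalize_polar_in_plane[OF m \<open>m \<bullet> M = 0\<close> \<open>norm M = r\<close> r(1)] y(2) by blast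
  then have "fold_dir m \<theta> \<psi> = y /\<^sub>R norm y" by (simp add: fold_dir_def M_def U_def W_def r_def)
  then have "sphere_pt k0 (fold_dir m \<theta> \<psi>) = y" using sphere_pt_normalize[OF y] by simp
  then show thesis by (rule that)
qed

(* The surface on which the two preimages merge: at height t, the Ewald sphere points in the
   plane spanned by m and the direction of angle alpha t / 2 in the plane orthogonal to m. *)
definition fold_param :: "real \<Rightarrow> real^3 \<Rightarrow> (real \<Rightarrow> real) \<Rightarrow> real \<times> real \<Rightarrow> real^3" where
  "fold_param k0 m \<alpha> p =
     (let z = sphere_pt k0 (fold_dir m (\<alpha> (snd p) / 2) (fst p)) in vector [z$1, z$2, snd p])"

lemma differentiable_on_fold_param:
  assumes "\<alpha> differentiable_on {0..L}"
  shows "fold_param k0 m \<alpha> differentiable_on (UNIV \<times> {0..L})"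
  unfolding differentiable_on_def
proof
  fix p :: "real \<times> real" assume p: "p \<in> UNIV \<times> {0..L}"
  then obtain D where D: "(\<alpha> has_derivative D) (at (snd p) within snd ` ((UNIV::real set) \<times> {0..L}))"
    using assms by (auto simp: differentiable_on_def differentiable_def)
  have "(snd has_derivative snd) (at p within UNIV \<times> {0..L})"
    by (rule bounded_linear.has_derivative[OF bounded_linear_snd has_derivative_ident])
  from has_derivative_in_compose[OF this D]
  have d\<alpha>: "((\<lambda>p. \<alpha> (snd p)) has_derivative (\<lambda>h. D (snd h))) (at p within UNIV \<times> {0..L})" .
  have "\<exists>D'. (fold_param k0 m \<alpha> has_derivative D') (at p within UNIV \<times> {0..L})"
    unfolding fold_param_def fold_dir_def sphere_pt_def Let_def vector3_eq_axis_sum divide_inverse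
    by (rule exI, (rule d\<alpha> derivative_intros bounded_linear.has_derivative[OF bounded_linear_vec_nth])+)
  then show "fold_param k0 m \<alpha> differentiable (at p within UNIV \<times> {0..L})"
    by (auto simp: differentiable_def)
qed

lemma in_fold_param_image:
  assumes m: "norm m = 1" "e3_perp m \<noteq> 0" and s: "s \<in> {1, -1}" and v: "v \<in> UU k0 L"
    and y: "ewald_pt k0 s v \<noteq> 0"
    and fold: "(ewald_pt k0 s v \<bullet> cross3 m e3) * cos (\<alpha> (v$3) / 2)
                 = (ewald_pt k0 s v \<bullet> e3_perp m) * sin (\<alpha> (v$3) / 2)"
  shows "v \<in> fold_param k0 m \<alpha> ` (UNIV \<times> {0..L})"
proof -
  obtain \<psi> where "sphere_pt k0 (fold_dir m (\<alpha> (v$3) / 2) \<psi>) = ewald_pt k0 s v"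
    using sphere_pt_fold_dir_surj[OF m ewald_pt_sphere[OF v s] y fold] .
  then have "fold_param k0 m \<alpha> (\<psi>, v$3) = v"
    by (simp add: fold_param_def ewald_pt_def vec_eq_iff forall_3)
  moreover have "(\<psi>, v$3) \<in> UNIV \<times> {0..L}" using v by (simp add: UU_def)
  ultimately show ?thesis by (metis image_eqI)
qed

lemma AE_card_TT_preimage:
  fixes \<alpha> :: "real \<Rightarrow> real"
  assumes k0: "k0 \<noteq> 0" and s: "s \<in> {1, -1}"
    and m: "norm m = 1" "m \<noteq> e3" "m \<noteq> - e3" and n: "\<forall>t \<in> {0..L}. n t = m"
    and \<alpha>: "strict_mono_on {0..L} \<alpha>" "\<alpha> differentiable_on {0..L}" "\<alpha> 0 = 0" "\<alpha> L = 2 * pi"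
  shows "AE v in lebesgue. v \<in> UU k0 L \<longrightarrow> card {w \<in> UU k0 L. TT k0 n \<alpha> s w = TT k0 n \<alpha> s v} = 2"
    (is "AE v in lebesgue. ?good v")
proof (rule AE_I')
  define N where "N = {x. e3 \<bullet> x = 0} \<union> {x. e3 \<bullet> x = L} \<union> {x. cross3 m e3 \<bullet> x = 0}
                      \<union> fold_param k0 m \<alpha> ` (UNIV \<times> {0..L})"
  have e3_perp: "e3_perp m \<noteq> 0" using e3_perp_nonzero[OF m] .
  then have "cross3 m e3 \<noteq> 0" using e3_perp_frame(3,4)[OF m(1)] by force
  moreover have "e3 \<noteq> 0" by (simp add: e3_def vec_eq_iff forall_3)
  ultimately have "negligible N" unfolding N_def
    by (intro negligible_Un negligible_hyperplane
              negligible_differentiable_image_lowdim[OF _ differentiable_on_fold_param[OF \<alpha>(2)]])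
       auto
  then show "N \<in> null_sets lebesgue" by (simp add: negligible_iff_null_sets)
  show "{v \<in> space lebesgue. \<not> ?good v} \<subseteq> N"
  proof (intro subsetI, rule ccontr)
    fix v assume "v \<in> {v \<in> space lebesgue. \<not> ?good v}" and "v \<notin> N"
    then have v: "v \<in> UU k0 L" and card: "card {w \<in> UU k0 L. TT k0 n \<alpha> s w = TT k0 n \<alpha> s v} \<noteq> 2"
      and t: "0 < v$3" "v$3 < L" and transversal: "m$2 * v$1 - m$1 * v$2 \<noteq> 0"
      and not_fold: "v \<notin> fold_param k0 m \<alpha> ` (UNIV \<times> {0..L})"
      by (auto simp: N_def UU_def inner_e3 inner_commute[of "cross3 m e3"] inner_cross3_e3 less_le)
    have "ewald_pt k0 s v \<bullet> cross3 m e3 \<noteq> 0"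
      using transversal by (simp add: inner_cross3_e3 ewald_pt_def)
    then have "(ewald_pt k0 s v \<bullet> cross3 m e3) * cos (\<alpha> (v$3) / 2)
                 \<noteq> (ewald_pt k0 s v \<bullet> e3_perp m) * sin (\<alpha> (v$3) / 2)"
      using in_fold_param_image[OF m(1) e3_perp s v] not_fold by force
    then show False
      using card_TT_preimage[OF k0 s m(1) n v t \<alpha>(1) differentiable_imp_continuous_on[OF \<alpha>(2)]
                               \<alpha>(3,4) transversal] card
      by simp
  qed
qed

theorem corollary4p3:
  fixes k0 r_s r_M p L :: real
    and f :: "real^3 \<Rightarrow> complex"
    and \<alpha> \<alpha>' :: "real \<Rightarrow> real"
    and n n' :: "real \<Rightarrow> real^3"
  assumes k0: "k0 > 0"
    and r: "0 < r_s" "r_s < r_M"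
    and p: "p > 1"
    and L: "L > 0"
    and f_meas: "f \<in> borel_measurable lebesgue"
    and f_Lp: "integrable lebesgue (\<lambda>x. norm (f x) powr p)"
    and f_supp: "closure {x. f x \<noteq> 0} \<subseteq> ball 0 r_s"
    and \<alpha>_deriv: "\<And>t. t \<in> {0..L} \<Longrightarrow> (\<alpha> has_real_derivative \<alpha>' t) (at t within {0..L})"
    and \<alpha>'_cont: "continuous_on {0..L} \<alpha>'"
    and n_sphere: "\<And>t. t \<in> {0..L} \<Longrightarrow> n t \<in> sphere 0 1"
    and n_deriv: "\<And>t. t \<in> {0..L} \<Longrightarrow> (n has_vector_derivative n' t) (at t within {0..L})"
    and n'_cont: "continuous_on {0..L} n'"
    and n_const: "\<And>t. t \<in> {0..L} \<Longrightarrow> n' t = 0"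
  shows "(\<forall>s \<in> {1, -1}. \<forall>v \<in> UU k0 L.
            \<exists>D. (TT k0 n \<alpha> s has_derivative D) (at v within UU k0 L) \<and>
                \<bar>det (matrix D)\<bar> =
                  k0 * \<bar>\<alpha>' (v$3)\<bar> * \<bar>(n (v$3))$2 * v$1 - (n (v$3))$1 * v$2\<bar>
                  / kappa k0 (v$1) (v$2))
         \<and> ((\<forall>t \<in> {0..L}. n t \<noteq> e3 \<and> n t \<noteq> - e3) \<and> strict_mono_on {0..L} \<alpha>
              \<and> \<alpha> 0 = 0 \<and> \<alpha> L = 2 * pi
            \<longrightarrow> (\<forall>s \<in> {1, -1}. AE v in lebesgue. v \<in> UU k0 L \<longrightarrow>
                   card {w \<in> UU k0 L. TT k0 n \<alpha> s w = TT k0 n \<alpha> s v} = 2))"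
proof -
  obtain m where "\<And>t. t \<in> {0..L} \<Longrightarrow> n t = m"
    using has_vector_derivative_zero_constant[of "{0..L}" n] n_deriv n_const by auto
  then have n_m: "\<forall>t \<in> {0..L}. n t = m" by blast
  have m: "norm m = 1" using n_sphere[of 0] n_m L by simp
  have "k0 \<noteq> 0" using k0 by simp
  moreover have "\<alpha> differentiable_on {0..L}"
    using \<alpha>_deriv unfolding differentiable_on_def real_differentiable_def by blast
  moreover have "m \<noteq> e3" "m \<noteq> - e3" if "\<forall>t \<in> {0..L}. n t \<noteq> e3 \<and> n t \<noteq> - e3"
    using that n_m L by auto
  ultimately show ?thesis
    using TT_has_derivative_det[OF k0 _ m \<alpha>_deriv n_m] AE_card_TT_preimage[OF _ _ m _ _ n_m]
    by blast
qed

end
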